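(* Let $R=R_1\times R_2\times R_3$ be a direct product of three finite commutative local rings with identity, and let $I=I_1\times I_2\times I_3$ where $I_i$ is a proper ideal of $R_i$ for $i=1,2,3$. If some $R_i$ ($1\leq i\leq 3$) has at least three elements, then $\Gamma''_I(R)$ is not planar.
   Context: The product has componentwise operations. For a commutative ring $R$ and an ideal $I$ of $R$, $\Gamma''_I(R)$ is the simple undirected graph whose vertex set is $\{x\in R\setminus I : xR+I\neq R\}$, with distinct vertices $x,y$ adjacent if and only if $x\notin yR+I$ and $y\notin xR+I$. A graph is planar if it can be drawn in the plane with edges meeting only at their endpoints. *)

theory Defs
  imports "HOL-Analysis.Analysis"
begin

instantiation prod :: (times, times) times
begin
definition times_prod_def: "x * y = (fst x * fst y, snd x * snd y)"
instance ..
end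

instantiation prod :: (one, one) one
begin
definition one_prod_def: "1 = (1, 1)"
instance ..
end

instance prod :: (comm_ring_1, comm_ring_1) comm_ring_1
  by standard (auto simp: times_prod_def one_prod_def zero_prod_def plus_prod_def
      algebra_simps prod_eq_iff)

definition is_ideal :: "'a::comm_ring_1 set \<Rightarrow> bool" where
  "is_ideal I \<longleftrightarrow> 0 \<in> I \<and> (\<forall>x\<in>I. \<forall>y\<in>I. x + y \<in> I) \<and> (\<forall>x\<in>I. \<forall>r. r * x \<in> I)"

definition proper_ideal :: "'a::comm_ring_1 set \<Rightarrow> bool" where
  "proper_ideal I \<longleftrightarrow> is_ideal I \<and> I \<noteq> UNIV"

definition maximal_ideal :: "'a::comm_ring_1 set \<Rightarrow> bool" where
  "maximal_ideal M \<longleftrightarrow> proper_ideal M \<and>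
     (\<forall>J. is_ideal J \<and> M \<subseteq> J \<longrightarrow> J = M \<or> J = UNIV)"

definition local_ring :: "'a::comm_ring_1 itself \<Rightarrow> bool" where
  "local_ring _ \<longleftrightarrow> (\<exists>!M::'a set. maximal_ideal M)"

definition span_plus :: "'a::comm_ring_1 \<Rightarrow> 'a set \<Rightarrow> 'a set" where
  "span_plus x I = {x * r + i | r i. i \<in> I}"

definition gamma2_verts :: "'a::comm_ring_1 set \<Rightarrow> 'a set" where
  "gamma2_verts I = {x. x \<notin> I \<and> span_plus x I \<noteq> UNIV}"

definition gamma2_adj :: "'a::comm_ring_1 set \<Rightarrow> 'a \<Rightarrow> 'a \<Rightarrow> bool" where
  "gamma2_adj I x y \<longleftrightarrow> x \<in> gamma2_verts I \<and> y \<in> gamma2_verts I \<and> x \<noteq> y \<and>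
     x \<notin> span_plus y I \<and> y \<notin> span_plus x I"

definition planar :: "'v set \<Rightarrow> ('v \<Rightarrow> 'v \<Rightarrow> bool) \<Rightarrow> bool" where
  "planar V E \<longleftrightarrow> (\<exists>(f :: 'v \<Rightarrow> complex) (p :: 'v \<Rightarrow> 'v \<Rightarrow> real \<Rightarrow> complex).
     inj_on f V \<and>
     (\<forall>u\<in>V. \<forall>v\<in>V. E u v \<longrightarrow>
        arc (p u v) \<and> pathstart (p u v) = f u \<and> pathfinish (p u v) = f v \<and>
        path_image (p u v) \<inter> f ` V = {f u, f v}) \<and>
     (\<forall>u\<in>V. \<forall>v\<in>V. \<forall>u'\<in>V. \<forall>v'\<in>V. E u v \<and> E u' v' \<and> {u, v} \<noteq> {u', v'} \<longrightarrow>
        path_image (p u v) \<inter> path_image (p u' v') \<subseteq> f ` ({u, v} \<inter> {u', v'})))"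

end

theory Submission
  imports Defs
begin

text \<open>If a factor, say the first, has three elements, then for all a, a' in it the vertices
  (a, 1, 0) and (a', 0, 1) of \<Gamma>''_I(R) are adjacent: neither lies in the ideal generated by
  the other plus I, because 1 is in no proper ideal. So \<Gamma>''_I(R) contains K_{3,3}.

  K_{3,3} is not planar by the Jordan curve theorem. In a drawing, the edges u0 v1 u1 v0 u2 v2
  form a hexagon J, and the remaining edges u0 v0, u1 v2, u2 v1 are chords of J whose ends
  interleave pairwise. By the theta-curve theorem, two disjoint interleaved chords lie on
  opposite sides of J, which is impossible for three chords.\<close>

definition path_image_endless :: "(real \<Rightarrow> 'a::topological_space) \<Rightarrow> 'a set" where
  "path_image_endless g = path_image g - {pathstart g, pathfinish g}"

lemma arc_image_subset_closure_endless:
  fixes g :: "real \<Rightarrow> 'a::t2_space"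
  assumes "arc g"
  shows "path_image g \<subseteq> closure (path_image_endless g)"
proof -
  have inj: "inj_on g {0..1}" and cont: "continuous_on {0..1} g"
    using assms by (auto simp: arc_def path_def)
  have "g ` {0<..<1} \<subseteq> path_image_endless g"
    using inj_onD[OF inj] by (fastforce simp: path_image_endless_def path_image_def pathstart_def pathfinish_def)
  then have "g ` closure {0<..<1} \<subseteq> closure (path_image_endless g)"
    using cont closure_subset by (intro image_closure_subset) auto
  then show ?thesis
    by (simp add: path_image_def)
qed

definition sides :: "'a::real_normed_vector set \<Rightarrow> 'a set set" where
  "sides S = {inside S, outside S}"

lemma
  assumes "closed S" "F \<in> sides S"
  shows open_side: "open F"
    and closure_side_subset: "closure F \<subseteq> S \<union> F"
  using assms closure_inside_subset[of S] closure_outside_subset[of S] open_inside[of S]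
    open_outside[of S]
  by (auto simp: sides_def)

definition opposite_sides :: "'a::real_normed_vector set \<Rightarrow> 'a set \<Rightarrow> 'a set \<Rightarrow> bool" where
  "opposite_sides S A B \<longleftrightarrow> A \<subseteq> inside S \<and> B \<subseteq> outside S \<or> A \<subseteq> outside S \<and> B \<subseteq> inside S"

lemma connected_subset_side:
  assumes "closed S" "connected D" "D \<inter> S = {}"
  obtains F where "F \<in> sides S" "D \<subseteq> F"
proof -
  have "D \<subseteq> inside S \<union> outside S"
    using assms(3) inside_Un_outside by blast
  then have "D \<subseteq> inside S \<or> D \<subseteq> outside S"
    using connectedD[OF assms(2) open_inside[OF assms(1)] open_outside[OF assms(1)]]
      inside_Int_outside by blast
  then show ?thesis
    using that by (auto simp: sides_def)
qed

lemma Jordan_two_arcs: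
  fixes c1 c2 :: "real \<Rightarrow> complex"
  assumes "arc c1" "arc c2" "pathstart c2 = pathstart c1" "pathfinish c2 = pathfinish c1"
    and "path_image c1 \<inter> path_image c2 \<subseteq> {pathstart c1, pathfinish c1}"
  shows "inside (path_image c1 \<union> path_image c2) \<noteq> {}"
    and "connected (inside (path_image c1 \<union> path_image c2))"
    and "connected (outside (path_image c1 \<union> path_image c2))"
    and "frontier (inside (path_image c1 \<union> path_image c2)) = path_image c1 \<union> path_image c2"
proof -
  have "simple_path (c1 +++ reversepath c2)"
    using assms by (simp add: simple_path_join_loop_eq arc_reversepath)
  moreover have "path_image (c1 +++ reversepath c2) = path_image c1 \<union> path_image c2"
    using assms by (simp add: path_image_join)
  ultimately show "inside (path_image c1 \<union> path_image c2) \<noteq> {}"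
    and "connected (inside (path_image c1 \<union> path_image c2))"
    and "connected (outside (path_image c1 \<union> path_image c2))"
    and "frontier (inside (path_image c1 \<union> path_image c2)) = path_image c1 \<union> path_image c2"
    using Jordan_inside_outside[of "c1 +++ reversepath c2"] assms by auto
qed

section \<open>Theta curves\<close>

locale theta_curve =
  fixes c1 c2 c3 :: "real \<Rightarrow> complex" and a b :: complex
  assumes arcs: "arc c1" "arc c2" "arc c3"
    and starts: "pathstart c1 = a" "pathstart c2 = a" "pathstart c3 = a"
    and finishes: "pathfinish c1 = b" "pathfinish c2 = b" "pathfinish c3 = b"
    and meets: "path_image c1 \<inter> path_image c2 \<subseteq> {a, b}"
      "path_image c1 \<inter> path_image c3 \<subseteq> {a, b}"
      "path_image c2 \<inter> path_image c3 \<subseteq> {a, b}"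
begin

abbreviation "X1 \<equiv> path_image c1"
abbreviation "X2 \<equiv> path_image c2"
abbreviation "X3 \<equiv> path_image c3"

lemma ends_mem: "a \<in> X1" "b \<in> X1" "a \<in> X2" "b \<in> X2" "a \<in> X3" "b \<in> X3"
  using pathstart_in_path_image[of c1] pathstart_in_path_image[of c2] pathstart_in_path_image[of c3]
    pathfinish_in_path_image[of c1] pathfinish_in_path_image[of c2] pathfinish_in_path_image[of c3]
  by (simp_all add: starts finishes)

lemma Int_eq: "X1 \<inter> X2 = {a, b}" "X1 \<inter> X3 = {a, b}" "X2 \<inter> X3 = {a, b}"
  using meets ends_mem by auto

lemma a_neq_b: "a \<noteq> b"
  using arc_distinct_ends[OF arcs(1)] starts finishes by simp

lemma compact_X: "compact X1" "compact X2" "compact X3"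
  using arcs by (simp_all add: compact_path_image arc_imp_path)

lemma closed_X: "closed X1" "closed X2" "closed X3"
  using compact_X by (simp_all add: compact_imp_closed)

lemma endless_X: "X1 - {a, b} \<noteq> {}" "X2 - {a, b} \<noteq> {}" "X3 - {a, b} \<noteq> {}"
  using arcs starts finishes nonempty_simple_path_endless arc_imp_simple_path by metis+

lemmas Jordan12 = Jordan_two_arcs[OF arcs(1,2), unfolded starts finishes, OF refl refl meets(1)]
lemmas Jordan13 = Jordan_two_arcs[OF arcs(1,3), unfolded starts finishes, OF refl refl meets(2)]
lemmas Jordan23 = Jordan_two_arcs[OF arcs(2,3), unfolded starts finishes, OF refl refl meets(3)]

lemma inside_subset_outside:
  assumes "X3 \<inter> inside (X1 \<union> X2) = {}" "X2 \<inter> inside (X1 \<union> X3) = {}"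
  shows "inside (X1 \<union> X2) \<subseteq> outside (X1 \<union> X3)"
proof -
  let ?U = "inside (X1 \<union> X2)"
  have "?U \<inter> (X1 \<union> X3) = {}"
    using assms(1) inside_no_overlap[of "X1 \<union> X2"] by blast
  then obtain F where F: "F \<in> sides (X1 \<union> X3)" "?U \<subseteq> F"
    using connected_subset_side closed_X Jordan12(2) by (metis closed_Un)
  obtain z where z: "z \<in> X2 - {a, b}"
    using endless_X by blast
  have "z \<in> closure ?U"
    using z Jordan12(4) frontier_def by (metis DiffD1 UnI2)
  then have "z \<in> X1 \<union> X3 \<union> F"
    using closure_mono[OF F(2)] closure_side_subset[OF _ F(1)] closed_X by blast
  then have "z \<in> F"
    using z Int_eq by blast
  with F(1) assms(2) z show ?thesis
    using F(2) by (auto simp: sides_def)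
qed

text \<open>If no arc met the inside of the cycle formed by the other two, the inside of X1 \<union> X2
  would lie outside both other cycles, and Janiszewski's theorem would connect it to infinity
  in the complement of X1 \<union> X2.\<close>

lemma some_arc_inside:
  "X3 \<inter> inside (X1 \<union> X2) \<noteq> {} \<or> X1 \<inter> inside (X2 \<union> X3) \<noteq> {} \<or>
   X2 \<inter> inside (X1 \<union> X3) \<noteq> {}"
proof (rule ccontr)
  assume "\<not> ?thesis"
  then have none: "X3 \<inter> inside (X1 \<union> X2) = {}" "X1 \<inter> inside (X2 \<union> X3) = {}"
    "X2 \<inter> inside (X1 \<union> X3) = {}"
    by auto
  interpret swapped: theta_curve c2 c1 c3 a b
    using arcs starts finishes meets by unfold_locales auto
  have out13: "inside (X1 \<union> X2) \<subseteq> outside (X1 \<union> X3)"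
    using inside_subset_outside none by blast
  have out23: "inside (X1 \<union> X2) \<subseteq> outside (X2 \<union> X3)"
    using swapped.inside_subset_outside none by (simp add: Un_commute)
  obtain u where u: "u \<in> inside (X1 \<union> X2)"
    using Jordan12(1) by blast
  have "bounded (X1 \<union> X2 \<union> X3)"
    using compact_X by (simp add: compact_imp_bounded)
  then obtain w where w: "w \<in> outside (X1 \<union> X2 \<union> X3)"
    using unbounded_outside by (metis bounded_empty equals0I)
  have "connected_component (- (X1 \<union> X3)) u w"
    using out13 u w outside_mono[of "X1 \<union> X3" "X1 \<union> X2 \<union> X3"] outside_no_overlap[of "X1 \<union> X3"]
    by (intro connected_componentI[OF Jordan13(3)]) blast+
  moreover have "connected_component (- (X2 \<union> X3)) u w"
    using out23 u w outside_mono[of "X2 \<union> X3" "X1 \<union> X2 \<union> X3"] outside_no_overlap[of "X2 \<union> X3"]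
    by (intro connected_componentI[OF Jordan23(3)]) blast+
  moreover have "(X1 \<union> X3) \<inter> (X2 \<union> X3) = X3"
    using Int_eq ends_mem by auto
  ultimately have "connected_component (- (X1 \<union> X3 \<union> (X2 \<union> X3))) u w"
    using Janiszewski[of "X1 \<union> X3" "X2 \<union> X3" u w] compact_X closed_X arcs(3)
    by (simp add: compact_Un closed_Un connected_path_image arc_imp_path)
  then have "connected_component (- (X1 \<union> X2)) u w"
    by (rule connected_component_of_subset) blast
  then have "w \<in> inside (X1 \<union> X2)"
    using inside_same_component u by blast
  moreover have "w \<in> outside (X1 \<union> X2)"
    using w outside_mono[of "X1 \<union> X2" "X1 \<union> X2 \<union> X3"] by blast
  ultimately show False
    using inside_Int_outside by blast
qed

lemma faces_if_inside:
  assumes "X3 \<inter> inside (X1 \<union> X2) \<noteq> {}"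
  shows "X3 \<inter> outside (X1 \<union> X2) = {}" "X2 \<inter> inside (X1 \<union> X3) = {}"
    "X1 \<inter> inside (X2 \<union> X3) = {}"
    "- (X1 \<union> X2 \<union> X3) \<subseteq> outside (X1 \<union> X2) \<union> inside (X1 \<union> X3) \<union> inside (X2 \<union> X3)"
    "outside (X1 \<union> X2) \<inter> inside (X1 \<union> X3) = {}" "outside (X1 \<union> X2) \<inter> inside (X2 \<union> X3) = {}"
    "inside (X1 \<union> X3) \<inter> inside (X2 \<union> X3) = {}"
proof -
  obtain disjoint: "inside (X1 \<union> X3) \<inter> inside (X2 \<union> X3) = {}"
    and split: "inside (X1 \<union> X3) \<union> inside (X2 \<union> X3) \<union> (X3 - {a, b}) = inside (X1 \<union> X2)"
    using split_inside_simple_closed_curve[OF _ starts(1) finishes(1) _ starts(2) finishes(2)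
        _ starts(3) finishes(3) a_neq_b Int_eq assms]
      arcs arc_imp_simple_path by blast
  have io: "inside (X1 \<union> X2) \<inter> outside (X1 \<union> X2) = {}"
    by (rule inside_Int_outside)
  show "X3 \<inter> outside (X1 \<union> X2) = {}"
    using split io ends_mem outside_no_overlap[of "X1 \<union> X2"] by blast
  show "X2 \<inter> inside (X1 \<union> X3) = {}" "X1 \<inter> inside (X2 \<union> X3) = {}"
    using split inside_no_overlap[of "X1 \<union> X2"] by blast+
  show "- (X1 \<union> X2 \<union> X3) \<subseteq> outside (X1 \<union> X2) \<union> inside (X1 \<union> X3) \<union> inside (X2 \<union> X3)"
    using split inside_Un_outside[of "X1 \<union> X2"] by blast
  show "outside (X1 \<union> X2) \<inter> inside (X1 \<union> X3) = {}" "outside (X1 \<union> X2) \<inter> inside (X2 \<union> X3) = {}"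
    using split io by blast+
  show "inside (X1 \<union> X3) \<inter> inside (X2 \<union> X3) = {}"
    by (rule disjoint)
qed

lemma faces:
  obtains F12 F13 F23
  where "F12 \<in> sides (X1 \<union> X2)" "F13 \<in> sides (X1 \<union> X3)" "F23 \<in> sides (X2 \<union> X3)"
    and "X3 \<inter> F12 = {}" "X2 \<inter> F13 = {}" "X1 \<inter> F23 = {}"
    and "- (X1 \<union> X2 \<union> X3) \<subseteq> F12 \<union> F13 \<union> F23"
    and "F12 \<inter> F13 = {}" "F12 \<inter> F23 = {}" "F13 \<inter> F23 = {}"
proof -
  interpret rot: theta_curve c2 c3 c1 a b
    using arcs starts finishes meets by unfold_locales auto
  interpret swap: theta_curve c1 c3 c2 a b
    using arcs starts finishes meets by unfold_locales auto
  consider "X3 \<inter> inside (X1 \<union> X2) \<noteq> {}" | "X1 \<inter> inside (X2 \<union> X3) \<noteq> {}"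
    | "X2 \<inter> inside (X1 \<union> X3) \<noteq> {}"
    using some_arc_inside by blast
  then show thesis
  proof cases
    case 1
    show thesis
      using faces_if_inside[OF 1]
      by (intro that[of "outside (X1 \<union> X2)" "inside (X1 \<union> X3)" "inside (X2 \<union> X3)"])
        (auto simp: sides_def)
  next
    case 2
    show thesis
      using rot.faces_if_inside[OF 2]
      by (intro that[of "inside (X1 \<union> X2)" "inside (X1 \<union> X3)" "outside (X2 \<union> X3)"])
        (auto simp: sides_def Un_commute)
  next
    case 3
    show thesis
      using swap.faces_if_inside[OF 3]
      by (intro that[of "inside (X1 \<union> X2)" "outside (X1 \<union> X3)" "inside (X2 \<union> X3)"])
        (auto simp: sides_def Un_commute)
  qed
qed

lemma connected_subset_face:
  assumes "connected D" "D \<inter> (X1 \<union> X2 \<union> X3) = {}"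
    and "r \<in> closure D" "r \<in> X1 - {a, b}" "s \<in> closure D" "s \<in> X2 - {a, b}"
  obtains F where "F \<in> sides (X1 \<union> X2)" "D \<subseteq> F" "X3 \<inter> F = {}"
proof -
  obtain F12 F13 F23
    where F: "F12 \<in> sides (X1 \<union> X2)" "F13 \<in> sides (X1 \<union> X3)" "F23 \<in> sides (X2 \<union> X3)"
    and avoid: "X3 \<inter> F12 = {}" "X2 \<inter> F13 = {}" "X1 \<inter> F23 = {}"
    and cover: "- (X1 \<union> X2 \<union> X3) \<subseteq> F12 \<union> F13 \<union> F23"
    and disj: "F12 \<inter> F13 = {}" "F12 \<inter> F23 = {}" "F13 \<inter> F23 = {}"
    using faces by blast
  have closed: "closed (X1 \<union> X2)" "closed (X1 \<union> X3)" "closed (X2 \<union> X3)"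
    using closed_X by auto
  have open_F: "open F12" "open F13" "open F23"
    using open_side closed F by blast+
  have "D \<subseteq> F12 \<or> D \<subseteq> F13 \<or> D \<subseteq> F23"
  proof -
    have "F12 \<inter> D = {} \<or> (F13 \<union> F23) \<inter> D = {}"
      using connectedD[OF assms(1) open_F(1) open_Un[OF open_F(2,3)]] assms(2) cover disj by blast
    moreover have "F13 \<inter> D = {} \<or> F23 \<inter> D = {}" if "F12 \<inter> D = {}"
      using connectedD[OF assms(1) open_F(2,3)] that assms(2) cover disj by blast
    ultimately show ?thesis
      using assms(2) cover by blast
  qed
  moreover have "\<not> D \<subseteq> F13"
  proof
    assume "D \<subseteq> F13"
    then have "s \<in> X1 \<union> X3 \<union> F13"
      using assms(5) closure_mono[of D F13] closure_side_subset[OF closed(2) F(2)] by blast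
    then show False
      using assms(6) avoid meets by blast
  qed
  moreover have "\<not> D \<subseteq> F23"
  proof
    assume "D \<subseteq> F23"
    then have "r \<in> X2 \<union> X3 \<union> F23"
      using assms(3) closure_mono[of D F23] closure_side_subset[OF closed(3) F(3)] by blast
    then show False
      using assms(4) avoid meets by blast
  qed
  ultimately show thesis
    using that F(1) avoid(1) by blast
qed

lemma chord_opposite_sides:
  assumes "arc d" "{pathstart d, pathfinish d} = {r, s}" "r \<in> X1 - {a, b}" "s \<in> X2 - {a, b}"
    and "path_image d \<inter> (X1 \<union> X2 \<union> X3) \<subseteq> {r, s}"
  shows "opposite_sides (X1 \<union> X2) (path_image_endless c3) (path_image_endless d)"
proof -
  let ?D = "path_image_endless d"
  have "connected ?D"
    using connected_simple_path_endless[OF arc_imp_simple_path[OF assms(1)]]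
    by (simp add: path_image_endless_def)
  moreover have "?D \<inter> (X1 \<union> X2 \<union> X3) = {}"
    using assms(2,5) by (auto simp: path_image_endless_def)
  moreover have "{r, s} \<subseteq> path_image d"
    unfolding assms(2)[symmetric] by (simp add: pathstart_in_path_image pathfinish_in_path_image)
  then have "{r, s} \<subseteq> closure ?D"
    using arc_image_subset_closure_endless[OF assms(1)] by (rule subset_trans)
  ultimately obtain F where F: "F \<in> sides (X1 \<union> X2)" "?D \<subseteq> F" "X3 \<inter> F = {}"
    using connected_subset_face[OF _ _ _ assms(3) _ assms(4)] by blast
  have "path_image_endless c3 \<subseteq> inside (X1 \<union> X2) \<union> outside (X1 \<union> X2) - F"
    using meets F(3) starts(3) finishes(3) inside_Un_outside[of "X1 \<union> X2"]
    by (auto simp: path_image_endless_def)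
  with F(1,2) show ?thesis
    using inside_Int_outside[of "X1 \<union> X2"] unfolding sides_def opposite_sides_def by blast
qed

end

section \<open>Non-planarity of K_{3,3}\<close>

lemma arc_join_zigzag:
  fixes g1 g2 g3 :: "real \<Rightarrow> 'a::t2_space"
  assumes "arc g1" "arc g2" "arc g3"
    and "pathfinish g1 = pathfinish g2" "pathstart g2 = pathstart g3"
    and "path_image g1 \<inter> path_image g2 \<subseteq> {pathfinish g2}"
    and "path_image g2 \<inter> path_image g3 \<subseteq> {pathstart g3}"
    and "path_image g1 \<inter> path_image g3 = {}"
  shows "arc (g1 +++ reversepath g2 +++ g3)"
    and "path_image (g1 +++ reversepath g2 +++ g3) = path_image g1 \<union> path_image g2 \<union> path_image g3"
  using assms by (auto intro!: arc_join arc_reversepath simp: path_image_join)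

locale bipartite_plane_drawing =
  fixes S :: "('i \<times> 'j) set" and u :: "'i \<Rightarrow> complex" and v :: "'j \<Rightarrow> complex"
    and g :: "'i \<Rightarrow> 'j \<Rightarrow> real \<Rightarrow> complex"
  assumes inj_u: "inj_on u (fst ` S)" and inj_v: "inj_on v (snd ` S)"
    and disjoint: "u ` fst ` S \<inter> v ` snd ` S = {}"
    and edge: "(i, j) \<in> S \<Longrightarrow> arc (g i j) \<and> pathstart (g i j) = u i \<and> pathfinish (g i j) = v j"
    and meet: "(i, j) \<in> S \<Longrightarrow> (i', j') \<in> S \<Longrightarrow> (i, j) \<noteq> (i', j') \<Longrightarrow>
      path_image (g i j) \<inter> path_image (g i' j') \<subseteq> u ` ({i} \<inter> {i'}) \<union> v ` ({j} \<inter> {j'})"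

definition edges_image :: "('i \<Rightarrow> 'j \<Rightarrow> real \<Rightarrow> complex) \<Rightarrow> ('i \<times> 'j) set \<Rightarrow> complex set" where
  "edges_image g T = (\<Union>(i, j)\<in>T. path_image (g i j))"

lemma edges_image_simps [simp]:
  "edges_image g {} = {}"
  "edges_image g (insert (i, j) T) = path_image (g i j) \<union> edges_image g T"
  by (simp_all add: edges_image_def)

context bipartite_plane_drawing
begin

lemma ends_in_edge:
  assumes "(i, j) \<in> S"
  shows "u i \<in> path_image (g i j)" "v j \<in> path_image (g i j)"
  using edge[OF assms] pathstart_in_path_image[of "g i j"] pathfinish_in_path_image[of "g i j"]
  by auto

lemma vertex_eq_iff:
  assumes "(i, j) \<in> S" "(i', j') \<in> S"
  shows "u i = u i' \<longleftrightarrow> i = i'" "v j = v j' \<longleftrightarrow> j = j'" "u i \<noteq> v j'" "v j' \<noteq> u i"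
proof -
  have "i \<in> fst ` S" "i' \<in> fst ` S" "j \<in> snd ` S" "j' \<in> snd ` S"
    using assms by force+
  then show "u i = u i' \<longleftrightarrow> i = i'" "v j = v j' \<longleftrightarrow> j = j'" "u i \<noteq> v j'" "v j' \<noteq> u i"
    using inj_on_eq_iff[OF inj_u] inj_on_eq_iff[OF inj_v] disjoint by blast+
qed

lemma edges_image_Int:
  assumes "T \<subseteq> S" "T' \<subseteq> S" "T \<inter> T' = {}"
  shows "edges_image g T \<inter> edges_image g T' \<subseteq> u ` (fst ` T \<inter> fst ` T') \<union> v ` (snd ` T \<inter> snd ` T')"
proof
  fix z
  assume "z \<in> edges_image g T \<inter> edges_image g T'"
  then obtain i j i' j' where ij: "(i, j) \<in> T" "(i', j') \<in> T'"
    and "z \<in> path_image (g i j) \<inter> path_image (g i' j')"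
    by (auto simp: edges_image_def)
  moreover have "(i, j) \<noteq> (i', j')"
    using ij assms(3) by blast
  ultimately have "z \<in> u ` ({i} \<inter> {i'}) \<union> v ` ({j} \<inter> {j'})"
    using meet[of i j i' j'] assms(1,2) by blast
  moreover have "i \<in> fst ` T" "i' \<in> fst ` T'" "j \<in> snd ` T" "j' \<in> snd ` T'"
    using ij by force+
  ultimately show "z \<in> u ` (fst ` T \<inter> fst ` T') \<union> v ` (snd ` T \<inter> snd ` T')"
    by blast
qed

lemma zigzag:
  assumes "(i, j) \<in> S" "(i', j) \<in> S" "(i', j') \<in> S" "i \<noteq> i'" "j \<noteq> j'"
  defines "z \<equiv> g i j +++ reversepath (g i' j) +++ g i' j'"
  shows "arc z" "pathstart z = u i" "pathfinish z = v j'"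
    "path_image z = edges_image g {(i, j), (i', j), (i', j')}"
proof -
  note edges = edge[OF assms(1)] edge[OF assms(2)] edge[OF assms(3)]
  have "path_image (g i j) \<inter> path_image (g i' j) \<subseteq> {v j}"
    "path_image (g i' j) \<inter> path_image (g i' j') \<subseteq> {u i'}"
    "path_image (g i j) \<inter> path_image (g i' j') = {}"
    using assms meet[of i j i' j] meet[of i' j i' j'] meet[of i j i' j'] by auto
  then show "arc z" "path_image z = edges_image g {(i, j), (i', j), (i', j')}"
    using arc_join_zigzag[of "g i j" "g i' j" "g i' j'"] edges by (simp_all add: z_def Un_ac)
  show "pathstart z = u i" "pathfinish z = v j'"
    using edges by (simp_all add: z_def)
qed

lemma theta_at_edge:
  assumes "distinct [i, i', i'']" "distinct [j, j', j'']"
    and "{(i, j), (i, j'), (i', j'), (i', j), (i, j''), (i'', j''), (i'', j)} \<subseteq> S"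
  shows "theta_curve (g i j' +++ reversepath (g i' j') +++ g i' j)
    (g i j'' +++ reversepath (g i'' j'') +++ g i'' j) (g i j) (u i) (v j)"
proof -
  have neq: "i \<noteq> i'" "i' \<noteq> i" "i \<noteq> i''" "i'' \<noteq> i" "i' \<noteq> i''" "i'' \<noteq> i'"
    "j \<noteq> j'" "j' \<noteq> j" "j \<noteq> j''" "j'' \<noteq> j" "j' \<noteq> j''" "j'' \<noteq> j'"
    using assms(1,2) by auto
  show ?thesis
    using assms(3) zigzag[of i j' i' j] zigzag[of i j'' i'' j] edge[of i j]
      edges_image_Int[of "{(i, j'), (i', j'), (i', j)}" "{(i, j''), (i'', j''), (i'', j)}"]
      edges_image_Int[of "{(i, j'), (i', j'), (i', j)}" "{(i, j)}"]
      edges_image_Int[of "{(i, j''), (i'', j''), (i'', j)}" "{(i, j)}"]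
    by unfold_locales (simp_all add: neq insert_commute)
qed

lemma hexagon_chords_opposite_sides:
  assumes "distinct [i, i', i'']" "distinct [j, j', j'']"
    and "{(i, j), (i, j'), (i', j'), (i', j), (i, j''), (i'', j''), (i'', j), (i', j'')} \<subseteq> S"
    and "H = {(i, j'), (i', j'), (i', j), (i, j''), (i'', j''), (i'', j)}"
  shows "opposite_sides (edges_image g H) (path_image_endless (g i j)) (path_image_endless (g i' j''))"
proof -
  interpret theta_curve "g i j' +++ reversepath (g i' j') +++ g i' j"
    "g i j'' +++ reversepath (g i'' j'') +++ g i'' j" "g i j" "u i" "v j"
    using theta_at_edge assms by simp
  have "X1 \<union> X2 = edges_image g H"
    using assms zigzag[of i j' i' j] zigzag[of i j'' i'' j] by auto
  moreover have "opposite_sides (X1 \<union> X2) (path_image_endless (g i j)) (path_image_endless (g i' j''))"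
    using assms edge[of i' j''] ends_in_edge[of i' j'] ends_in_edge[of i j'']
      zigzag[of i j' i' j] zigzag[of i j'' i'' j] edges_image_Int[of "{(i', j'')}" "H \<union> {(i, j)}"]
    by (intro chord_opposite_sides[of _ "u i'" "v j''"]) (auto simp: vertex_eq_iff)
  ultimately show ?thesis
    by simp
qed

end

lemma K33_no_plane_drawing: "\<not> bipartite_plane_drawing ({..<3::nat} \<times> {..<3::nat}) u v g"
proof
  let ?H = "{(0, 1), (1, 1), (1, 0), (0, 2), (2, 2), (2, 0)} :: (nat \<times> nat) set"
  let ?J = "edges_image g ?H"
  let ?e = "\<lambda>i j. path_image_endless (g i j)"
  assume "bipartite_plane_drawing ({..<3} \<times> {..<3}) u v g"
  then interpret bipartite_plane_drawing "{..<3} \<times> {..<3}" u v g .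
  have "?e i j \<noteq> {}" if "i < 3" "j < 3" for i j
    using nonempty_simple_path_endless[OF arc_imp_simple_path[of "g i j"]] edge[of i j] that
    by (simp add: path_image_endless_def)
  then have "?e 0 0 \<noteq> {}" "?e 1 2 \<noteq> {}" "?e 2 1 \<noteq> {}"
    by simp_all
  \<comment> \<open>?H is K_{3,3} minus the matching u0 v0, u1 v2, u2 v1; each index choice below
    reproduces it with two of the matching edges as interleaved chords.\<close>
  moreover have "opposite_sides ?J (?e 0 0) (?e 1 2)"
    by (rule hexagon_chords_opposite_sides[of 0 1 2 0 1 2]) auto
  moreover have "opposite_sides ?J (?e 0 0) (?e 2 1)"
    by (rule hexagon_chords_opposite_sides[of 0 2 1 0 2 1]) auto
  moreover have "opposite_sides ?J (?e 1 2) (?e 2 1)"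
    by (rule hexagon_chords_opposite_sides[of 1 2 0 2 0 1]) auto
  ultimately show False
    using inside_Int_outside[of ?J] unfolding opposite_sides_def by blast
qed

lemma not_planar_if_K33:
  fixes x y :: "'i \<Rightarrow> 'v"
  assumes "3 \<le> CARD('i)" "inj x" "inj y"
    and K33: "\<And>i j. x i \<in> V \<and> y j \<in> V \<and> x i \<noteq> y j \<and> E (x i) (y j)"
  shows "\<not> planar V E"
proof
  assume "planar V E"
  then obtain f :: "'v \<Rightarrow> complex" and p where "inj_on f V"
    and arcs: "\<And>w z. w \<in> V \<Longrightarrow> z \<in> V \<Longrightarrow> E w z \<Longrightarrow>
      arc (p w z) \<and> pathstart (p w z) = f w \<and> pathfinish (p w z) = f z"
    and meets: "\<And>w z w' z'. w \<in> V \<Longrightarrow> z \<in> V \<Longrightarrow> w' \<in> V \<Longrightarrow> z' \<in> V \<Longrightarrow> E w z \<Longrightarrow> E w' z' \<Longrightarrow>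
      {w, z} \<noteq> {w', z'} \<Longrightarrow> path_image (p w z) \<inter> path_image (p w' z') \<subseteq> f ` ({w, z} \<inter> {w', z'})"
    unfolding planar_def by metis
  have "finite (UNIV :: 'i set)"
    using assms(1) card_ge_0_finite by force
  then obtain k :: "nat \<Rightarrow> 'i" where k: "inj_on k {..<3}"
    using card_le_inj[of "{..<3::nat}" "UNIV :: 'i set"] assms(1) by auto
  have [simp]: "x (k i) = x (k i') \<longleftrightarrow> i = i'" "y (k i) = y (k i') \<longleftrightarrow> i = i'"
    if "i < 3" "i' < 3" for i i'
    using inj_onD[OF k] that assms(2,3) by (auto dest: injD)
  have [simp]: "x i \<noteq> y j" "y j \<noteq> x i" for i j
    using K33 by metis+
  have [simp]: "f (x i) \<noteq> f (y j)" "f (x i) = f (x i') \<longleftrightarrow> x i = x i'"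
    "f (y j) = f (y j') \<longleftrightarrow> y j = y j'" for i i' j j'
    using \<open>inj_on f V\<close> K33 by (auto dest: inj_onD)
  have "bipartite_plane_drawing ({..<3} \<times> {..<3}) (f \<circ> x \<circ> k) (f \<circ> y \<circ> k) (\<lambda>i j. p (x (k i)) (y (k j)))"
  proof (rule bipartite_plane_drawing.intro)
    fix i j i' j' :: nat
    assume ij: "(i, j) \<in> {..<3} \<times> {..<3}" "(i', j') \<in> {..<3} \<times> {..<3}" "(i, j) \<noteq> (i', j')"
    then have "{x (k i), y (k j)} \<noteq> {x (k i'), y (k j')}"
      by (auto simp: doubleton_eq_iff)
    then have "path_image (p (x (k i)) (y (k j))) \<inter> path_image (p (x (k i')) (y (k j')))
        \<subseteq> f ` ({x (k i), y (k j)} \<inter> {x (k i'), y (k j')})"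
      using meets K33 by blast
    also have "\<dots> \<subseteq> (f \<circ> x \<circ> k) ` ({i} \<inter> {i'}) \<union> (f \<circ> y \<circ> k) ` ({j} \<inter> {j'})"
      using ij by auto
    finally show "path_image (p (x (k i)) (y (k j))) \<inter> path_image (p (x (k i')) (y (k j')))
        \<subseteq> (f \<circ> x \<circ> k) ` ({i} \<inter> {i'}) \<union> (f \<circ> y \<circ> k) ` ({j} \<inter> {j'})" .
  qed (use arcs K33 in \<open>auto simp: inj_on_def\<close>)
  then show False
    using K33_no_plane_drawing by blast
qed

section \<open>The graph \<Gamma>''_I(R) of a product of three rings\<close>

lemma span_plus_Pair: "span_plus (x, y) (I \<times> J) = span_plus x I \<times> span_plus y J"
  by (force simp: span_plus_def times_prod_def)

lemma Times_eq_UNIV_iff: "A \<times> B = UNIV \<longleftrightarrow> A = UNIV \<and> B = UNIV"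
  by (auto simp: set_eq_iff)

lemma
  fixes I :: "'a::comm_ring_1 set"
  assumes "proper_ideal I"
  shows proper_ideal_zero: "0 \<in> I"
    and proper_ideal_one: "1 \<notin> I"
    and proper_ideal_neq_UNIV: "I \<noteq> UNIV"
    and span_plus_zero: "span_plus 0 I = I"
    and span_plus_one: "span_plus 1 I = UNIV"
proof -
  show "0 \<in> I" "I \<noteq> UNIV"
    using assms by (auto simp: proper_ideal_def is_ideal_def)
  show "1 \<notin> I"
    using assms unfolding proper_ideal_def is_ideal_def by (metis UNIV_eq_I mult.right_neutral)
  show "span_plus 0 I = I"
    by (auto simp: span_plus_def)
  show "span_plus 1 I = UNIV"
    using \<open>0 \<in> I\<close> by (force simp: span_plus_def)
qed

lemmas gamma2_Times_simps = gamma2_adj_def gamma2_verts_def span_plus_Pair Times_eq_UNIV_iff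
  proper_ideal_zero proper_ideal_one proper_ideal_neq_UNIV span_plus_zero span_plus_one

lemma gamma2_not_planar_if_K33:
  fixes x y :: "'i \<Rightarrow> 'a::comm_ring_1"
  assumes "3 \<le> CARD('i)" "inj x" "inj y" "\<And>i j. gamma2_adj I (x i) (y j)"
  shows "\<not> planar (gamma2_verts I) (gamma2_adj I)"
  by (rule not_planar_if_K33[OF assms(1-3)]) (use assms(4) in \<open>auto simp: gamma2_adj_def\<close>)

theorem proposition3p6:
  fixes I1 :: "'a::comm_ring_1 set" and I2 :: "'b::comm_ring_1 set" and I3 :: "'c::comm_ring_1 set"
  assumes "finite (UNIV :: 'a set)" and "finite (UNIV :: 'b set)" and "finite (UNIV :: 'c set)"
    and "local_ring TYPE('a)" and "local_ring TYPE('b)" and "local_ring TYPE('c)"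
    and "proper_ideal I1" and "proper_ideal I2" and "proper_ideal I3"
    and "CARD('a) \<ge> 3 \<or> CARD('b) \<ge> 3 \<or> CARD('c) \<ge> 3"
  shows "\<not> planar (gamma2_verts (I1 \<times> I2 \<times> I3)) (gamma2_adj (I1 \<times> I2 \<times> I3))"
proof -
  note ideals = assms(7-9)
  consider "CARD('a) \<ge> 3" | "CARD('b) \<ge> 3" | "CARD('c) \<ge> 3"
    using assms(10) by blast
  then show ?thesis
  proof cases
    case 1
    show ?thesis
      by (rule gamma2_not_planar_if_K33[OF 1, of "\<lambda>a. (a, 1, 0)" "\<lambda>a. (a, 0, 1)"])
        (use ideals in \<open>auto simp: inj_def gamma2_Times_simps\<close>)
  next
    case 2
    show ?thesis
      by (rule gamma2_not_planar_if_K33[OF 2, of "\<lambda>b. (1, b, 0)" "\<lambda>b. (0, b, 1)"])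
        (use ideals in \<open>auto simp: inj_def gamma2_Times_simps\<close>)
  next
    case 3
    show ?thesis
      by (rule gamma2_not_planar_if_K33[OF 3, of "\<lambda>c. (1, 0, c)" "\<lambda>c. (0, 1, c)"])
        (use ideals in \<open>auto simp: inj_def gamma2_Times_simps\<close>)
  qed
qed

end
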